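(* Let $G$ be a connected $m$-uniform hypergraph on $n$ vertices, and let $d(G)$ be the maximum length of a path in $G$. Then $s(G)\le m^{n-d(G)-1}$ and $\gamma(G)\le(n-d(G)-1)\mathrm{cl}(m)$.
   Context: Paths: a walk $v_1,e_1,\dots,v_l,e_l,v_{l+1}$ (with $\{v_i,v_{i+1}\}\subseteq e_i$) is a path of length $l$ if its vertices and edges are distinct and $v_i\notin\bigcup_{j>i}e_j$ for $i=1,\dots,l-1$. Adjacency tensor $\mathcal{A}(G)$ (vertices $v_1,\dots,v_n$): $a_{i_1\cdots i_m}=\frac1{(m-1)!}$ if $\{v_{i_1},\dots,v_{i_m}\}$ is an edge, else $0$. For a tensor $\mathcal{A}$: eigenvectors $\mathcal{A}x^{m-1}=\lambda x^{[m-1]}$, $x\ne0$, $(\mathcal{A}x^{m-1})_i=\sum a_{ii_2\cdots i_m}x_{i_2}\cdots x_{i_m}$; $\rho(\mathcal{A})$ spectral radius. Stabilizing index $s(\mathcal{A})$: number of invertible diagonal $D$ with $d_{11}=1$ and $\mathcal{A}=D^{-(m-1)}\mathcal{A}D$, $(D^{-(m-1)}\mathcal{A}D)_{i_1\cdots i_m}=d_{i_1}^{-(m-1)}a_{i_1\cdots i_m}d_{i_2}\cdots d_{i_m}$. Stabilizing dimension $\gamma(\mathcal{A})$: composition length of the $\mathbb{Z}_m$-module of eigenvectors $y$ for $\rho(\mathcal{A})$ normalized by $y_1=1$, with operation $y\circ\hat y=D_yD_{\hat y}v_p$, $D_y=\mathrm{diag}(y_i/|y_i|)$, $v_p$ the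 positive one. $s(G)=s(\mathcal{A}(G))$, $\gamma(G)=\gamma(\mathcal{A}(G))$. $\mathrm{cl}(m)$: number of prime factors of $m$ with multiplicity. *)

theory Defs
  imports Complex_Main "HOL-Computational_Algebra.Primes"
begin

text \<open>Hypergraphs on the vertex set {0..<n} (vertex v_{i+1} of the paper is i here);
  edges are sets of vertices.\<close>

definition uniform_hypergraph :: "nat \<Rightarrow> nat \<Rightarrow> nat set set \<Rightarrow> bool" where
  "uniform_hypergraph n m E \<longleftrightarrow> (\<forall>e\<in>E. e \<subseteq> {..<n} \<and> card e = m)"

definition hg_adj :: "nat set set \<Rightarrow> (nat \<times> nat) set" where
  "hg_adj E = {(u, v). \<exists>e\<in>E. u \<in> e \<and> v \<in> e}"

definition hg_connected :: "nat \<Rightarrow> nat set set \<Rightarrow> bool" where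
  "hg_connected n E \<longleftrightarrow> (\<forall>u<n. \<forall>v<n. (u, v) \<in> (hg_adj E)\<^sup>*)"

text \<open>Path v_1,e_1,...,v_l,e_l,v_{l+1} given as vertex list vs (length l+1) and edge list es
  (length l), 0-indexed.\<close>
definition is_path :: "nat \<Rightarrow> nat set set \<Rightarrow> nat list \<Rightarrow> nat set list \<Rightarrow> bool" where
  "is_path n E vs es \<longleftrightarrow>
     length vs = Suc (length es) \<and> set vs \<subseteq> {..<n} \<and> set es \<subseteq> E \<and>
     distinct vs \<and> distinct es \<and>
     (\<forall>i<length es. {vs ! i, vs ! Suc i} \<subseteq> es ! i) \<and>
     (\<forall>i j. i < j \<and> j < length es \<longrightarrow> vs ! i \<notin> es ! j)"

definition max_path_length :: "nat \<Rightarrow> nat set set \<Rightarrow> nat" where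
  "max_path_length n E = Max {length es | vs es. is_path n E vs es}"

text \<open>Tensors of order m and dimension n: functions on index lists (entries in {0..<n}).\<close>

definition adj_tensor :: "nat \<Rightarrow> nat set set \<Rightarrow> nat list \<Rightarrow> real" where
  "adj_tensor m E is = (if length is = m \<and> set is \<in> E then 1 / fact (m - 1) else 0)"

definition idx_lists :: "nat \<Rightarrow> nat \<Rightarrow> nat list set" where
  "idx_lists n k = {is. length is = k \<and> set is \<subseteq> {..<n}}"

definition tensor_apply :: "nat \<Rightarrow> nat \<Rightarrow> (nat list \<Rightarrow> real) \<Rightarrow> (nat \<Rightarrow> complex) \<Rightarrow> nat \<Rightarrow> complex" where
  "tensor_apply n m A x i = (\<Sum>is\<in>idx_lists n (m - 1). complex_of_real (A (i # is)) * prod_list (map x is))"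

text \<open>Vectors in C^n: functions vanishing outside {0..<n}.\<close>
definition is_vec :: "nat \<Rightarrow> (nat \<Rightarrow> complex) \<Rightarrow> bool" where
  "is_vec n x \<longleftrightarrow> (\<forall>i\<ge>n. x i = 0)"

definition tensor_eigenpair :: "nat \<Rightarrow> nat \<Rightarrow> (nat list \<Rightarrow> real) \<Rightarrow> complex \<Rightarrow> (nat \<Rightarrow> complex) \<Rightarrow> bool" where
  "tensor_eigenpair n m A lam x \<longleftrightarrow> is_vec n x \<and> (\<exists>i<n. x i \<noteq> 0) \<and>
     (\<forall>i<n. tensor_apply n m A x i = lam * x i ^ (m - 1))"

definition tensor_spectral_radius :: "nat \<Rightarrow> nat \<Rightarrow> (nat list \<Rightarrow> real) \<Rightarrow> real" where
  "tensor_spectral_radius n m A = Sup {cmod lam | lam. \<exists>x. tensor_eigenpair n m A lam x}"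

text \<open>Stabilizing index: number of invertible diagonal D (diagonal d, with d i = 1 for i \<ge> n as
  canonical padding) with d_11 = 1 and A = D^{-(m-1)} A D.\<close>
definition stabilizing_index :: "nat \<Rightarrow> nat \<Rightarrow> (nat list \<Rightarrow> real) \<Rightarrow> nat" where
  "stabilizing_index n m A = card {d :: nat \<Rightarrow> complex.
      (\<forall>i<n. d i \<noteq> 0) \<and> (\<forall>i\<ge>n. d i = 1) \<and> d 0 = 1 \<and>
      (\<forall>is\<in>idx_lists n m. complex_of_real (A is) =
          inverse (d (hd is) ^ (m - 1)) * complex_of_real (A is) * prod_list (map d (tl is)))}"

definition rho_vecs :: "nat \<Rightarrow> nat \<Rightarrow> (nat list \<Rightarrow> real) \<Rightarrow> (nat \<Rightarrow> complex) set" where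
  "rho_vecs n m A = {y. tensor_eigenpair n m A (complex_of_real (tensor_spectral_radius n m A)) y \<and> y 0 = 1}"

definition pos_vec :: "nat \<Rightarrow> nat \<Rightarrow> (nat list \<Rightarrow> real) \<Rightarrow> nat \<Rightarrow> complex" where
  "pos_vec n m A = (THE y. y \<in> rho_vecs n m A \<and> (\<forall>i<n. y i \<in> \<real> \<and> 0 < Re (y i)))"

text \<open>y o y' = D_y D_{y'} v_p with D_y = diag(y_i/|y_i|).\<close>
definition stab_op :: "nat \<Rightarrow> nat \<Rightarrow> (nat list \<Rightarrow> real) \<Rightarrow> (nat \<Rightarrow> complex) \<Rightarrow> (nat \<Rightarrow> complex) \<Rightarrow> nat \<Rightarrow> complex" where
  "stab_op n m A y z = (\<lambda>i. if i < n then sgn (y i) * sgn (z i) * pos_vec n m A i else 0)"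

text \<open>Z_m-scalar action: k . y = y o ... o y (k times), 0 . y = v_p (the zero of the module).\<close>
definition stab_smult :: "nat \<Rightarrow> nat \<Rightarrow> (nat list \<Rightarrow> real) \<Rightarrow> nat \<Rightarrow> (nat \<Rightarrow> complex) \<Rightarrow> nat \<Rightarrow> complex" where
  "stab_smult n m A k y = (stab_op n m A y ^^ k) (pos_vec n m A)"

definition stab_submodule :: "nat \<Rightarrow> nat \<Rightarrow> (nat list \<Rightarrow> real) \<Rightarrow> (nat \<Rightarrow> complex) set \<Rightarrow> bool" where
  "stab_submodule n m A N \<longleftrightarrow> N \<subseteq> rho_vecs n m A \<and> pos_vec n m A \<in> N \<and>
     (\<forall>a\<in>N. \<forall>b\<in>N. stab_op n m A a b \<in> N) \<and>
     (\<forall>a\<in>N. \<forall>k. stab_smult n m A k a \<in> N)"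

text \<open>Composition length = maximal length of a strictly increasing chain of submodules.\<close>
definition stabilizing_dimension :: "nat \<Rightarrow> nat \<Rightarrow> (nat list \<Rightarrow> real) \<Rightarrow> nat" where
  "stabilizing_dimension n m A = Max {k. \<exists>N :: nat \<Rightarrow> (nat \<Rightarrow> complex) set.
      (\<forall>i\<le>k. stab_submodule n m A (N i)) \<and> (\<forall>i<k. N i \<subset> N (Suc i))}"

definition cl :: "nat \<Rightarrow> nat" where
  "cl m = size (prime_factorization m)"

end

(*
  The diagonal similarities D with d_1 = 1 fixing the adjacency tensor are exactly the d with
  d_i^(m-1) = prod_{j in e - {i}} d_j for all i in e in E; by connectivity they form a group of
  functions whose values are m-th roots of unity. Along a longest path v_1, e_1, ..., e_l, v_(l+1),
  read backwards, the value at v_k is forced by the edge e_k from values at later path vertices and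
  off-path vertices, so D is determined by its ratios at the n - l - 1 remaining vertices. This
  embeds the group into (mu_m)^(n-l-1), and Lagrange's theorem gives s(G) dvd m^(n-l-1).

  For the stabilizing dimension, the Perron vector (a maximizer of the Lagrangian
  sum_e prod_{j in e} x_j on the nonnegative unit m-sphere) is positive, and every eigenvector for
  rho normalized at v_1 is the Perron vector twisted by a stabilizer, its phase. This turns a strict
  chain of submodules into a chain of subgroups with strictly increasing orders, each dividing the
  next, whose length is at most cl(s(G)) <= (n - l - 1) cl(m).
*)
theory Submission
  imports Defs "HOL-Analysis.Analysis" "HOL-Algebra.Coset" "HOL-Combinatorics.Multiset_Permutations"
begin

section \<open>Groups of root-of-unity valued functions\<close>

definition pointwise_monoid :: "('a \<Rightarrow> 'b::comm_monoid_mult) set \<Rightarrow> ('a \<Rightarrow> 'b) monoid" where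
  "pointwise_monoid T = \<lparr>carrier = T, mult = (\<lambda>a b i. a i * b i), one = (\<lambda>i. 1)\<rparr>"

definition root_group :: "nat \<Rightarrow> ('a \<Rightarrow> 'b::comm_monoid_mult) set \<Rightarrow> bool" where
  "root_group k T \<longleftrightarrow>
     (\<lambda>i. 1) \<in> T \<and> (\<forall>a\<in>T. \<forall>b\<in>T. (\<lambda>i. a i * b i) \<in> T) \<and> (\<forall>a\<in>T. \<forall>i. a i ^ k = 1)"

lemma root_group_power_closed:
  assumes "root_group k T" "a \<in> T" shows "(\<lambda>i. a i ^ j) \<in> T"
proof (induction j)
  case 0 then show ?case using assms by (simp add: root_group_def)
next
  case (Suc j)
  have "(\<lambda>i. a i * a i ^ j) \<in> T" using assms Suc by (simp add: root_group_def)
  then show ?case by simp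
qed

lemma root_group_inverse:
  assumes "root_group k T" "k \<ge> 1" "a \<in> T"
  shows "(\<lambda>i. a i ^ (k - 1)) \<in> T" "(\<lambda>i. a i ^ (k - 1) * a i) = (\<lambda>i. 1)"
proof -
  show "(\<lambda>i. a i ^ (k - 1)) \<in> T" using root_group_power_closed[OF assms(1,3)] .
  have "a i ^ (k - 1) * a i = a i ^ k" for i using assms(2) by (cases k) (simp_all add: mult.commute)
  then show "(\<lambda>i. a i ^ (k - 1) * a i) = (\<lambda>i. 1)" using assms(1,3) by (simp add: root_group_def)
qed

lemma group_pointwise_monoid:
  assumes "root_group k T" "k \<ge> 1"
  shows "group (pointwise_monoid T)"
proof (rule groupI)
  fix x assume "x \<in> carrier (pointwise_monoid T)"
  then show "\<exists>y\<in>carrier (pointwise_monoid T). y \<otimes>\<^bsub>pointwise_monoid T\<^esub> x = \<one>\<^bsub>pointwise_monoid T\<^esub>"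
    using root_group_inverse[OF assms]
    by (intro bexI[of _ "\<lambda>i. x i ^ (k - 1)"]) (auto simp: pointwise_monoid_def)
qed (use assms in \<open>auto simp: pointwise_monoid_def root_group_def mult.assoc\<close>)

lemma root_group_card_dvd:
  assumes "root_group k T" "root_group k U" "T \<subseteq> U" "k \<ge> 1"
  shows "card T dvd card U"
proof -
  interpret G: group "pointwise_monoid U" by (rule group_pointwise_monoid[OF assms(2,4)])
  have "subgroup T (pointwise_monoid U)"
  proof (rule G.subgroupI)
    fix a assume a: "a \<in> T"
    have "inv\<^bsub>pointwise_monoid U\<^esub> a = (\<lambda>i. a i ^ (k - 1))"
      using root_group_inverse[OF assms(1,4) a] a assms(3)
      by (intro G.inv_equality) (auto simp: pointwise_monoid_def)
    then show "inv\<^bsub>pointwise_monoid U\<^esub> a \<in> T" using root_group_inverse[OF assms(1,4) a] by simp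
  qed (use assms in \<open>auto simp: pointwise_monoid_def root_group_def\<close>)
  then have "card (rcosets\<^bsub>pointwise_monoid U\<^esub> T) * card T = order (pointwise_monoid U)"
    by (rule G.lagrange)
  then show ?thesis unfolding order_def pointwise_monoid_def by (metis dvd_triv_right partial_object.select_convs(1))
qed

lemma root_group_image:
  assumes T: "root_group k T"
    and hom: "\<And>a b. a \<in> T \<Longrightarrow> b \<in> T \<Longrightarrow> f (\<lambda>i. a i * b i) = (\<lambda>i. f a i * f b i)"
    and one: "f (\<lambda>i. 1) = (\<lambda>i. 1)" and roots: "\<And>a i. a \<in> T \<Longrightarrow> f a i ^ k = 1"
  shows "root_group k (f ` T)"
  unfolding root_group_def
proof (intro conjI ballI allI)
  have "(\<lambda>i. 1) \<in> T" using T by (simp add: root_group_def)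
  with one show "(\<lambda>i. 1) \<in> f ` T" by (metis image_eqI)
next
  fix x y assume "x \<in> f ` T" "y \<in> f ` T"
  then obtain a b where ab: "a \<in> T" "b \<in> T" and "x = f a" "y = f b" by blast
  then have "(\<lambda>i. x i * y i) = f (\<lambda>i. a i * b i)" using hom by simp
  moreover have "(\<lambda>i. a i * b i) \<in> T" using T ab by (simp add: root_group_def)
  ultimately show "(\<lambda>i. x i * y i) \<in> f ` T" by (rule image_eqI)
next
  fix x i assume "x \<in> f ` T"
  then show "x i ^ k = 1" using roots by blast
qed

definition root_functions :: "nat \<Rightarrow> 'a set \<Rightarrow> ('a \<Rightarrow> complex) set" where
  "root_functions k A = {f. \<forall>j. (j \<in> A \<longrightarrow> f j ^ k = 1) \<and> (j \<notin> A \<longrightarrow> f j = 1)}"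

lemma root_group_root_functions: "root_group k (root_functions k A)"
  by (auto simp: root_group_def root_functions_def power_mult_distrib) (metis power_one)

lemma card_root_functions:
  assumes "finite A" "k > 0"
  shows "card (root_functions k A) = k ^ card A"
proof -
  define R where "R = {z::complex. z ^ k = 1}"
  define extend where "extend = (\<lambda>g::'a \<Rightarrow> complex. \<lambda>j. if j \<in> A then g j else 1)"
  have "root_functions k A = extend ` PiE A (\<lambda>_. R)"
  proof (intro Set.set_eqI iffI)
    fix f assume f: "f \<in> root_functions k A"
    then have "f = extend (restrict f A)" by (auto simp: extend_def root_functions_def)
    moreover have "restrict f A \<in> PiE A (\<lambda>_. R)" using f by (auto simp: root_functions_def R_def)
    ultimately show "f \<in> extend ` PiE A (\<lambda>_. R)" by blast
  qed (auto simp: extend_def root_functions_def R_def)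
  moreover have "inj_on extend (PiE A (\<lambda>_. R))"
    by (rule inj_onI) (auto simp: extend_def PiE_def extensional_def fun_eq_iff split: if_splits, metis)
  ultimately show ?thesis
    using card_PiE[OF assms(1), of "\<lambda>_. R"] card_roots_unity_eq[OF assms(2)]
    by (simp add: card_image R_def)
qed

section \<open>The number of prime factors\<close>

lemma cl_mult: "(a::nat) \<noteq> 0 \<Longrightarrow> b \<noteq> 0 \<Longrightarrow> cl (a * b) = cl a + cl b"
  unfolding cl_def by (simp add: prime_factorization_mult)

lemma cl_pos:
  assumes "(a::nat) \<ge> 2" shows "cl a > 0"
proof -
  have "prime_factorization a \<noteq> {#}" using assms by (simp add: prime_factorization_empty_iff)
  then show ?thesis unfolding cl_def by (simp add: nonempty_has_size)
qed

lemma cl_le_of_dvd: "(a::nat) dvd b \<Longrightarrow> b \<noteq> 0 \<Longrightarrow> cl a \<le> cl b"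
  by (elim dvdE) (simp add: cl_mult)

lemma cl_power: "(a::nat) \<noteq> 0 \<Longrightarrow> cl (a ^ k) = k * cl a"
  by (induction k) (simp_all add: cl_def prime_factorization_mult)

lemma dvd_chain_length_le_cl:
  fixes f :: "nat \<Rightarrow> nat"
  assumes "\<And>i. i < k \<Longrightarrow> f i dvd f (Suc i) \<and> f i \<noteq> f (Suc i)" and "f k \<noteq> 0"
  shows "k \<le> cl (f k)"
  using assms
proof (induction k)
  case (Suc k)
  obtain r where r: "f (Suc k) = f k * r" using Suc.prems(1)[of k] by blast
  have "f k \<noteq> 0" "r \<noteq> 0" using Suc.prems(2) r by auto
  moreover have "r \<noteq> 1" using Suc.prems(1)[of k] r by auto
  ultimately have "k \<le> cl (f k)" "cl r > 0" using Suc by (auto intro: cl_pos)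
  then show ?case using r \<open>f k \<noteq> 0\<close> \<open>r \<noteq> 0\<close> by (simp add: cl_mult)
qed simp

text \<open>Strict convexity of the unit disc.\<close>
lemma units_eq_of_weighted_sum_eq:
  fixes w :: "'a \<Rightarrow> real" and u :: "'a \<Rightarrow> complex"
  assumes "finite A" and w: "\<And>a. a \<in> A \<Longrightarrow> 0 < w a" and u: "\<And>a. a \<in> A \<Longrightarrow> cmod (u a) = 1"
    and D: "cmod D = 1" and eq: "(\<Sum>a\<in>A. of_real (w a) * u a) = of_real (\<Sum>a\<in>A. w a) * D"
    and a: "a \<in> A"
  shows "u a = D"
proof -
  have DD: "D * cnj D = 1" using complex_norm_square[of D] D by simp
  define v where "v b = u b * cnj D" for b
  have v: "cmod (v b) = 1" if "b \<in> A" for b using u[OF that] D by (simp add: v_def norm_mult)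
  have "(\<Sum>b\<in>A. of_real (w b) * v b) = of_real (\<Sum>b\<in>A. w b)"
    using arg_cong[OF eq, of "\<lambda>z. z * cnj D"] DD by (simp add: v_def sum_distrib_right mult.assoc)
  then have "Re (\<Sum>b\<in>A. of_real (w b) * v b) = (\<Sum>b\<in>A. w b)" by simp
  moreover have "Re (\<Sum>b\<in>A. of_real (w b) * v b) = (\<Sum>b\<in>A. w b * Re (v b))"
    by (simp add: Re_sum)
  ultimately have "(\<Sum>b\<in>A. w b * Re (v b)) = (\<Sum>b\<in>A. w b)" by simp
  then have "(\<Sum>b\<in>A. w b * (1 - Re (v b))) = 0"
    by (simp add: right_diff_distrib sum_subtractf)
  moreover have "0 \<le> w b * (1 - Re (v b))" if "b \<in> A" for b
    using complex_Re_le_cmod[of "v b"] v[OF that] w[OF that] by simp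
  ultimately have "\<forall>b\<in>A. w b * (1 - Re (v b)) = 0"
    using sum_nonneg_eq_0_iff[OF assms(1), of "\<lambda>b. w b * (1 - Re (v b))"] by simp
  then have "Re (v a) = 1" using w[OF a] a by force
  then have "v a = 1"
    using v[OF a] cmod_power2[of "v a"] by (simp add: complex_eq_iff)
  then have "u a * cnj D = 1" by (simp add: v_def)
  have "u a = u a * (cnj D * D)" using DD by (simp add: mult.commute)
  also have "\<dots> = D" using \<open>u a * cnj D = 1\<close> by (simp flip: mult.assoc)
  finally show ?thesis .
qed

lemma exists_power_gap:
  fixes c M :: real
  assumes "0 < c" "0 \<le> M" "k < m"
  shows "\<exists>t>0. M * t ^ m < t ^ k * c"
proof -
  define t where "t = c / (M + c + 1)"
  have t: "0 < t" "t \<le> 1" using assms by (auto simp: t_def divide_le_eq)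
  have "t * (M + c + 1) = c" using assms by (simp add: t_def)
  then have "M * t = c - t * (c + 1)" by (simp add: algebra_simps)
  moreover have "0 < t * (c + 1)" using t assms by simp
  ultimately have "M * t < c" by simp
  have "M * t ^ m \<le> M * t ^ (k + 1)"
    using t assms by (intro mult_left_mono power_decreasing) auto
  also have "\<dots> = t ^ k * (M * t)" by (simp add: algebra_simps)
  also have "\<dots> < t ^ k * c" using \<open>M * t < c\<close> t by simp
  finally show ?thesis using t by blast
qed

section \<open>Connected uniform hypergraphs\<close>

lemma sum_permutations_of_set_prod_list:
  assumes "finite A"
  shows "(\<Sum>xs\<in>permutations_of_set A. prod_list (map x xs)) = fact (card A) * prod x A"
proof -
  have "(\<Sum>xs\<in>permutations_of_set A. prod_list (map x xs)) = (\<Sum>xs\<in>permutations_of_set A. prod x A)"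
    by (rule sum.cong) (auto simp: permutations_of_set_def prod.distinct_set_conv_list)
  then show ?thesis using assms by simp
qed

locale connected_uniform_hypergraph =
  fixes n m :: nat and E :: "nat set set"
  assumes m_ge_2: "m \<ge> 2" and n_pos: "n \<ge> 1" and uniform: "uniform_hypergraph n m E"
    and connected: "hg_connected n E"
begin

lemma edge_subset: "e \<in> E \<Longrightarrow> e \<subseteq> {..<n}"
  using uniform unfolding uniform_hypergraph_def by auto

lemma card_edge: "e \<in> E \<Longrightarrow> card e = m"
  using uniform unfolding uniform_hypergraph_def by auto

lemma finite_edge: "e \<in> E \<Longrightarrow> finite e"
  using edge_subset finite_subset by blast

lemma finite_edges: "finite E"
  by (rule finite_subset[of _ "Pow {..<n}"]) (use edge_subset in auto)

lemma edge_nonempty: "e \<in> E \<Longrightarrow> e \<noteq> {}"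
  using card_edge m_ge_2 by fastforce

lemma card_edge_remove: "e \<in> E \<Longrightarrow> i \<in> e \<Longrightarrow> card (e - {i}) = m - 1"
  using card_edge finite_edge by simp

lemma prod_edge_remove: "e \<in> E \<Longrightarrow> i \<in> e \<Longrightarrow> (\<Prod>j\<in>e. f j) = f i * (\<Prod>j\<in>e-{i}. f j)"
  using prod.remove[OF finite_edge] .

lemma connected_induct:
  assumes step: "\<And>e u v. e \<in> E \<Longrightarrow> u \<in> e \<Longrightarrow> v \<in> e \<Longrightarrow> Q u \<Longrightarrow> Q v"
    and "Q p" "p < n" "j < n"
  shows "Q j"
proof -
  have "(p, j) \<in> (hg_adj E)\<^sup>*" using connected assms(3,4) unfolding hg_connected_def by auto
  then show ?thesis
  proof (induction rule: rtrancl_induct)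
    case (step y z)
    then obtain e where "e \<in> E" "y \<in> e" "z \<in> e" by (auto simp: hg_adj_def)
    then show ?case using assms(1) step.IH by blast
  qed (fact assms(2))
qed

lemma finite_idx_lists: "finite (idx_lists n k)"
  using finite_lists_length_eq[of "{..<n}" k] by (simp add: idx_lists_def conj_commute)

lemma distinct_of_edge_list:
  assumes "xs \<in> idx_lists n m" "set xs \<in> E"
  shows "distinct xs"
  using card_edge[OF assms(2)] assms(1) by (intro card_distinct) (simp add: idx_lists_def)

lemma edge_lists_through:
  "{xs \<in> idx_lists n (m - 1). set (i # xs) \<in> E} = (\<Union>e\<in>{e\<in>E. i \<in> e}. permutations_of_set (e - {i}))"
proof (intro Set.set_eqI iffI)
  fix xs assume xs: "xs \<in> {xs \<in> idx_lists n (m - 1). set (i # xs) \<in> E}"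
  then have "i # xs \<in> idx_lists n m" using m_ge_2 edge_subset by (auto simp: idx_lists_def)
  then have "distinct (i # xs)" using distinct_of_edge_list xs by blast
  then show "xs \<in> (\<Union>e\<in>{e\<in>E. i \<in> e}. permutations_of_set (e - {i}))"
    using xs by (auto simp: permutations_of_set_def intro!: bexI[of _ "set (i # xs)"])
next
  fix xs assume "xs \<in> (\<Union>e\<in>{e\<in>E. i \<in> e}. permutations_of_set (e - {i}))"
  then obtain e where e: "e \<in> E" "i \<in> e" and xs: "set xs = e - {i}" "distinct xs"
    by (auto simp: permutations_of_set_def)
  then have "length xs = m - 1" using card_edge_remove distinct_card by metis
  moreover have "set (i # xs) = e" using xs e by auto
  ultimately show "xs \<in> {xs \<in> idx_lists n (m - 1). set (i # xs) \<in> E}"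
    using e edge_subset xs by (auto simp: idx_lists_def)
qed

definition adj_apply :: "(nat \<Rightarrow> 'a::comm_semiring_1) \<Rightarrow> nat \<Rightarrow> 'a" where
  "adj_apply x i = (\<Sum>e\<in>{e\<in>E. i \<in> e}. \<Prod>j\<in>e-{i}. x j)"

lemma tensor_apply_adj_tensor: "tensor_apply n m (adj_tensor m E) x i = adj_apply x i"
proof -
  define c :: complex where "c = of_real (1 / fact (m - 1))"
  define P where "P e = permutations_of_set (e - {i})" for e
  have fin_P: "finite (P e)" for e by (simp add: P_def)
  have disj: "P e \<inter> P e' = {}" if "e \<in> {e\<in>E. i \<in> e}" "e' \<in> {e\<in>E. i \<in> e}" "e \<noteq> e'" for e e'
    using that by (auto simp: P_def permutations_of_set_def)
  have "tensor_apply n m (adj_tensor m E) x i =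
      (\<Sum>xs\<in>idx_lists n (m - 1). if set (i # xs) \<in> E then c * prod_list (map x xs) else 0)"
    unfolding tensor_apply_def adj_tensor_def c_def
    by (rule sum.cong) (use m_ge_2 in \<open>auto simp: idx_lists_def\<close>)
  also have "\<dots> = (\<Sum>xs\<in>{xs\<in>idx_lists n (m - 1). set (i # xs) \<in> E}. c * prod_list (map x xs))"
    by (rule sum.inter_filter[OF finite_idx_lists, symmetric])
  also have "\<dots> = (\<Sum>e\<in>{e\<in>E. i \<in> e}. \<Sum>xs\<in>P e. c * prod_list (map x xs))"
    unfolding edge_lists_through P_def[symmetric]
    by (rule sum.UNION_disjoint) (use finite_edges fin_P disj in auto)
  also have "\<dots> = (\<Sum>e\<in>{e\<in>E. i \<in> e}. \<Prod>j\<in>e-{i}. x j)"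
  proof (rule sum.cong[OF refl])
    fix e assume "e \<in> {e\<in>E. i \<in> e}"
    then have "(\<Sum>xs\<in>P e. c * prod_list (map x xs)) = c * (fact (m - 1) * prod x (e - {i}))"
      by (simp add: P_def sum_distrib_left[symmetric] sum_permutations_of_set_prod_list
          finite_edge card_edge)
    then show "(\<Sum>xs\<in>P e. c * prod_list (map x xs)) = (\<Prod>j\<in>e-{i}. x j)"
      by (simp add: c_def)
  qed
  finally show ?thesis unfolding adj_apply_def .
qed

subsection \<open>Diagonal similarities fixing the adjacency tensor\<close>

definition edge_balanced :: "(nat \<Rightarrow> complex) \<Rightarrow> bool" where
  "edge_balanced d \<longleftrightarrow> (\<forall>e\<in>E. \<forall>i\<in>e. (\<Prod>j\<in>e-{i}. d j) = d i ^ (m - 1))"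

definition stabilizers :: "(nat \<Rightarrow> complex) set" where
  "stabilizers = {d. (\<forall>i<n. d i \<noteq> 0) \<and> (\<forall>i\<ge>n. d i = 1) \<and> d 0 = 1 \<and> edge_balanced d}"

lemma edge_index_list:
  assumes "e \<in> E" "i \<in> e"
  obtains xs where "xs \<in> idx_lists n m" "set xs = e" "hd xs = i"
proof -
  obtain ys where ys: "set ys = e - {i}" "distinct ys"
    using finite_distinct_list finite_edge[OF assms(1)] by (metis finite_Diff)
  then have "length (i # ys) = m" using assms card_edge_remove distinct_card m_ge_2 by fastforce
  then show ?thesis using that[of "i # ys"] ys assms edge_subset by (auto simp: idx_lists_def)
qed

lemma hd_idx_list: "xs \<in> idx_lists n m \<Longrightarrow> hd xs < n \<and> hd xs \<in> set xs"
  using m_ge_2 by (cases xs) (auto simp: idx_lists_def)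

lemma scaling_fixes_entry_iff:
  assumes xs: "xs \<in> idx_lists n m" and d: "d (hd xs) \<noteq> 0"
  shows "complex_of_real (adj_tensor m E xs) =
           inverse (d (hd xs) ^ (m - 1)) * complex_of_real (adj_tensor m E xs) * prod_list (map d (tl xs))
     \<longleftrightarrow> (set xs \<in> E \<longrightarrow> (\<Prod>j\<in>set xs - {hd xs}. d j) = d (hd xs) ^ (m - 1))"
proof (cases "set xs \<in> E")
  case True
  obtain a ys where "xs = a # ys" using xs m_ge_2 by (cases xs) (auto simp: idx_lists_def)
  moreover have "distinct xs" by (rule distinct_of_edge_list[OF xs True])
  ultimately have "prod_list (map d (tl xs)) = (\<Prod>j\<in>set xs - {hd xs}. d j)"
    by (simp add: prod.distinct_set_conv_list)
  moreover have "adj_tensor m E xs \<noteq> 0" using True xs by (simp add: adj_tensor_def idx_lists_def)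
  ultimately show ?thesis using True d by (auto simp: field_simps)
qed (simp add: adj_tensor_def)

lemma fixes_adj_tensor_iff_edge_balanced:
  assumes d: "\<forall>i<n. d i \<noteq> 0"
  shows "(\<forall>xs\<in>idx_lists n m. complex_of_real (adj_tensor m E xs) =
           inverse (d (hd xs) ^ (m - 1)) * complex_of_real (adj_tensor m E xs) * prod_list (map d (tl xs)))
    \<longleftrightarrow> edge_balanced d"
  (is "?fixes \<longleftrightarrow> _")
proof -
  have "?fixes \<longleftrightarrow>
      (\<forall>xs\<in>idx_lists n m. set xs \<in> E \<longrightarrow> (\<Prod>j\<in>set xs - {hd xs}. d j) = d (hd xs) ^ (m - 1))"
    using scaling_fixes_entry_iff hd_idx_list d by simp
  also have "\<dots> \<longleftrightarrow> edge_balanced d"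
  proof
    assume H: "\<forall>xs\<in>idx_lists n m. set xs \<in> E \<longrightarrow> (\<Prod>j\<in>set xs - {hd xs}. d j) = d (hd xs) ^ (m - 1)"
    show "edge_balanced d" unfolding edge_balanced_def
    proof (intro ballI)
      fix e i assume "e \<in> E" "i \<in> e"
      then obtain xs where "xs \<in> idx_lists n m" "set xs = e" "hd xs = i" by (rule edge_index_list)
      then show "(\<Prod>j\<in>e-{i}. d j) = d i ^ (m - 1)" using H \<open>e \<in> E\<close> by auto
    qed
  qed (use hd_idx_list in \<open>auto simp: edge_balanced_def\<close>)
  finally show ?thesis .
qed

lemma stabilizing_index_eq_card: "stabilizing_index n m (adj_tensor m E) = card stabilizers"
  unfolding stabilizing_index_def stabilizers_def
  using fixes_adj_tensor_iff_edge_balanced by (intro arg_cong[where f = card] Collect_cong) blast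

lemma edge_balanced_prod:
  assumes "edge_balanced d" "e \<in> E" "u \<in> e"
  shows "(\<Prod>j\<in>e. d j) = d u ^ m"
proof -
  have "(\<Prod>j\<in>e. d j) = d u * d u ^ (m - 1)"
    using prod_edge_remove[OF assms(2,3), of d] assms by (simp add: edge_balanced_def)
  also have "\<dots> = d u ^ m" using m_ge_2 by (cases m) simp_all
  finally show ?thesis .
qed

lemma stabilizer_power:
  assumes d: "d \<in> stabilizers" shows "d i ^ m = 1"
proof (cases "i < n")
  case True
  show ?thesis
  proof (rule connected_induct[where Q = "\<lambda>u. d u ^ m = 1" and p = 0])
    show "d v ^ m = 1" if "e \<in> E" "u \<in> e" "v \<in> e" "d u ^ m = 1" for e u v
      using that edge_balanced_prod[of d e u] edge_balanced_prod[of d e v] d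
      by (simp add: stabilizers_def)
  qed (use d True n_pos in \<open>auto simp: stabilizers_def\<close>)
qed (use d in \<open>simp add: stabilizers_def\<close>)

lemma stabilizer_edge_prod:
  assumes "d \<in> stabilizers" "e \<in> E" shows "(\<Prod>j\<in>e. d j) = 1"
proof -
  obtain u where "u \<in> e" using edge_nonempty[OF assms(2)] by blast
  then show ?thesis
    using edge_balanced_prod[of d e u] stabilizer_power[OF assms(1)] assms by (simp add: stabilizers_def)
qed

lemma root_group_stabilizers: "root_group m stabilizers"
  using m_ge_2 stabilizer_power
  by (auto simp: root_group_def stabilizers_def edge_balanced_def prod.distrib power_mult_distrib)

subsection \<open>Paths bound the number of stabilizers\<close>

lemma path_length_less:
  assumes "is_path n E vs es" shows "length es < n"
proof -
  have "length vs = card (set vs)" using assms by (simp add: is_path_def distinct_card)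
  also have "\<dots> \<le> card {..<n}" using assms by (intro card_mono) (auto simp: is_path_def)
  finally show ?thesis using assms by (simp add: is_path_def)
qed

lemma longest_path:
  obtains vs es where "is_path n E vs es" "length es = max_path_length n E"
proof -
  define L where "L = {length es | vs es. is_path n E vs es}"
  have "finite L" by (rule finite_subset[of _ "{..<n}"]) (auto simp: L_def path_length_less)
  moreover have "is_path n E [0] []" using n_pos by (simp add: is_path_def)
  then have "L \<noteq> {}" by (auto simp: L_def)
  ultimately have "Max L \<in> L" by (rule Max_in)
  then show ?thesis using that unfolding L_def max_path_length_def by auto
qed

text \<open>The final vertex \<open>vs ! length es\<close> of the path counts as off the path.\<close>
definition off_path :: "nat list \<Rightarrow> nat set list \<Rightarrow> nat set" where
  "off_path vs es = {..<n} - set (take (length es) vs)"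

lemma card_off_path:
  assumes "is_path n E vs es" shows "card (off_path vs es) = n - length es"
proof -
  have "set (take (length es) vs) \<subseteq> {..<n}" using assms by (auto simp: is_path_def dest: in_set_takeD)
  moreover have "card (set (take (length es) vs)) = length es"
    using assms by (simp add: is_path_def distinct_card)
  ultimately show ?thesis unfolding off_path_def by (simp add: card_Diff_subset finite_subset)
qed

text \<open>Going backwards along the path: the edge \<open>es ! k\<close> contains \<open>vs ! k\<close>, and all its
  other vertices are off the path or later path vertices.\<close>
lemma eq_one_of_off_path:
  assumes path: "is_path n E vs es"
    and edge: "\<And>e. e \<in> E \<Longrightarrow> (\<Prod>j\<in>e. q j) = (1::'a::comm_monoid_mult)"
    and off: "\<And>j. j \<in> off_path vs es \<Longrightarrow> q j = 1"
    and "j < n"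
  shows "q j = 1"
proof -
  define l where "l = length es"
  have lv: "length vs = Suc l" using path by (simp add: is_path_def l_def)
  have on_path: "q (vs ! k) = 1" if "k < l" for k
    using that
  proof (induction "l - k" arbitrary: k rule: less_induct)
    case less
    have e: "es ! k \<in> E" "vs ! k \<in> es ! k" using path less.prems by (auto simp: is_path_def l_def)
    have "q u = 1" if u: "u \<in> es ! k - {vs ! k}" for u
    proof (cases "u \<in> set (take l vs)")
      case True
      then obtain k' where k': "k' < l" "vs ! k' = u" using lv by (auto simp: in_set_conv_nth)
      have "\<not> k' < k" using path k' u less.prems by (auto simp: is_path_def l_def)
      then have "k < k'" using k' u by (cases "k = k'") auto
      then show ?thesis using less.hyps[of k'] k' by simp
    qed (use off edge_subset e u in \<open>auto simp: off_path_def l_def\<close>)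
    then have "(\<Prod>j\<in>es ! k - {vs ! k}. q j) = 1" by (rule prod.neutral[rule_format])
    then show ?case using edge[OF e(1)] prod_edge_remove[OF e, of q] by simp
  qed
  show ?thesis
  proof (cases "j \<in> set (take l vs)")
    case True
    then obtain k where "k < l" "vs ! k = j" using lv by (auto simp: in_set_conv_nth)
    then show ?thesis using on_path by auto
  qed (use off \<open>j < n\<close> in \<open>simp add: off_path_def l_def\<close>)
qed

lemma stabilizer_nonzero: "d \<in> stabilizers \<Longrightarrow> j < n \<Longrightarrow> d j \<noteq> 0"
  by (simp add: stabilizers_def)

lemma inj_on_off_path_ratios:
  assumes path: "is_path n E vs es" and c: "c \<in> off_path vs es"
  shows "inj_on (\<lambda>d j. if j \<in> off_path vs es - {c} then d j / d c else 1) stabilizers"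
proof (rule inj_onI)
  fix d d' assume d: "d \<in> stabilizers" and d': "d' \<in> stabilizers"
    and eq: "(\<lambda>j. if j \<in> off_path vs es - {c} then d j / d c else 1) =
             (\<lambda>j. if j \<in> off_path vs es - {c} then d' j / d' c else 1)"
  have "c < n" using c by (simp add: off_path_def)
  define w where "w = d' c / d c"
  have w: "w \<noteq> 0" "w ^ m = 1"
    using stabilizer_nonzero[OF d \<open>c < n\<close>] stabilizer_nonzero[OF d' \<open>c < n\<close>]
      stabilizer_power[OF d] stabilizer_power[OF d'] by (simp_all add: w_def power_divide)
  define q where "q j = d' j / (w * d j)" for j
  have "(\<Prod>j\<in>e. q j) = 1" if e: "e \<in> E" for e
    using stabilizer_edge_prod[OF d e] stabilizer_edge_prod[OF d' e] card_edge[OF e] w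
    by (simp add: q_def prod_dividef prod.distrib)
  moreover have "q j = 1" if j: "j \<in> off_path vs es" for j
  proof (cases "j = c")
    case False
    have "j < n" using j by (simp add: off_path_def)
    then show ?thesis
      using fun_cong[OF eq, of j] j False w stabilizer_nonzero[OF d] stabilizer_nonzero[OF d'] \<open>c < n\<close>
      by (auto simp: q_def w_def field_simps)
  qed (use stabilizer_nonzero[OF d \<open>c < n\<close>] stabilizer_nonzero[OF d' \<open>c < n\<close>] in
         \<open>simp add: q_def w_def\<close>)
  ultimately have q: "q j = 1" if "j < n" for j using eq_one_of_off_path[OF path] that by blast
  then have "w = 1" using q[of 0] d d' n_pos by (simp add: q_def stabilizers_def)
  show "d = d'"
  proof
    fix j show "d j = d' j"
      using q[of j] \<open>w = 1\<close> stabilizer_nonzero[OF d, of j] d d' by (cases "j < n") (auto simp: q_def stabilizers_def)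
  qed
qed

lemma card_stabilizers_dvd:
  assumes path: "is_path n E vs es"
  shows "card stabilizers dvd m ^ (n - length es - 1)"
proof -
  define F where "F = off_path vs es"
  have "card F = n - length es" unfolding F_def by (rule card_off_path[OF path])
  moreover have "length es < n" by (rule path_length_less[OF path])
  ultimately obtain c where c: "c \<in> F" by fastforce
  define C where "C = F - {c}"
  define \<psi> where "\<psi> = (\<lambda>(d :: nat \<Rightarrow> complex) j. if j \<in> C then d j / d c else 1)"
  have "finite C" by (simp add: C_def F_def off_path_def)
  have "card C = n - length es - 1" using \<open>card F = n - length es\<close> c by (simp add: C_def F_def)
  have "c < n" using c by (simp add: F_def off_path_def)
  have into: "\<psi> ` stabilizers \<subseteq> root_functions m C"
    using stabilizer_power by (auto simp: \<psi>_def root_functions_def power_divide)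
  have "root_group m (\<psi> ` stabilizers)"
  proof (rule root_group_image[OF root_group_stabilizers])
    show "a \<in> stabilizers \<Longrightarrow> \<psi> a i ^ m = 1" for a i
      using into root_group_root_functions[of m C] by (auto simp: root_group_def)
  qed (simp_all add: \<psi>_def fun_eq_iff)
  then have "card (\<psi> ` stabilizers) dvd card (root_functions m C)"
    using root_group_card_dvd[OF _ root_group_root_functions into] m_ge_2 by simp
  moreover have "inj_on \<psi> stabilizers"
    using inj_on_off_path_ratios[OF path] c by (simp add: \<psi>_def C_def F_def)
  ultimately show ?thesis
    using card_root_functions[OF \<open>finite C\<close>] m_ge_2 \<open>card C = n - length es - 1\<close>
    by (simp add: card_image)
qed

section \<open>The Perron vector of the adjacency tensor\<close>

definition lagrangian :: "(nat \<Rightarrow> real) \<Rightarrow> real" where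
  "lagrangian x = (\<Sum>e\<in>E. \<Prod>j\<in>e. x j)"

definition power_sum :: "(nat \<Rightarrow> real) \<Rightarrow> real" where
  "power_sum x = (\<Sum>i<n. x i ^ m)"

definition nonneg_sphere :: "(nat \<Rightarrow> real) set" where
  "nonneg_sphere = {x. (\<forall>i<n. 0 \<le> x i) \<and> (\<forall>i\<ge>n. x i = 0) \<and> power_sum x = 1}"

lemma nonneg_sphere_le_1:
  assumes "x \<in> nonneg_sphere" "i < n" shows "x i \<le> 1"
proof (rule ccontr)
  assume "\<not> x i \<le> 1"
  then have "1 < x i ^ m" using m_ge_2 by (simp add: one_less_power)
  also have "x i ^ m \<le> power_sum x"
    unfolding power_sum_def using assms by (intro member_le_sum) (auto simp: nonneg_sphere_def)
  finally show False using assms by (simp add: nonneg_sphere_def)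
qed

lemma compact_nonneg_sphere: "compact nonneg_sphere"
proof -
  define B where "B = PiE UNIV (\<lambda>i::nat. if i < n then {0..1::real} else {0})"
  have "compactin (product_topology (\<lambda>i. euclidean) UNIV) B"
    unfolding B_def by (subst compactin_PiE) auto
  then have "compact B" by (simp add: euclidean_product_topology)
  have coord: "continuous_on S (\<lambda>x::nat \<Rightarrow> real. x j)" for S j
    by (rule continuous_on_product_then_coordinatewise[OF continuous_on_id])
  have "continuous_on UNIV power_sum" unfolding power_sum_def
    by (intro continuous_on_sum continuous_on_power coord)
  then have "closed {x. power_sum x = 1}" by (rule closed_Collect_eq) simp
  moreover have "nonneg_sphere = B \<inter> {x. power_sum x = 1}"
    using nonneg_sphere_le_1 by (auto simp: nonneg_sphere_def B_def split: if_splits)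
  ultimately show ?thesis using compact_Int_closed[OF \<open>compact B\<close>] by simp
qed

lemma nonneg_sphere_nonempty: "(\<lambda>i. if i = 0 then 1 else 0) \<in> nonneg_sphere"
proof -
  have "power_sum (\<lambda>i. if i = 0 then 1 else 0) = (\<Sum>i<n. if i = 0 then 1 else 0)"
    unfolding power_sum_def by (rule sum.cong) (use m_ge_2 in auto)
  then show ?thesis using n_pos by (auto simp: nonneg_sphere_def)
qed

definition maximizer :: "nat \<Rightarrow> real" where
  "maximizer = (SOME x. x \<in> nonneg_sphere \<and> (\<forall>y\<in>nonneg_sphere. lagrangian y \<le> lagrangian x))"

definition max_lagrangian :: real where
  "max_lagrangian = lagrangian maximizer"

lemma maximizer_in_nonneg_sphere: "maximizer \<in> nonneg_sphere"
  and lagrangian_le_max: "y \<in> nonneg_sphere \<Longrightarrow> lagrangian y \<le> max_lagrangian"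
proof -
  have coord: "continuous_on S (\<lambda>x::nat \<Rightarrow> real. x j)" for S j
    by (rule continuous_on_product_then_coordinatewise[OF continuous_on_id])
  have "continuous_on nonneg_sphere lagrangian" unfolding lagrangian_def
    by (intro continuous_on_sum continuous_on_prod coord)
  then have "\<exists>x. x \<in> nonneg_sphere \<and> (\<forall>y\<in>nonneg_sphere. lagrangian y \<le> lagrangian x)"
    using continuous_attains_sup[OF compact_nonneg_sphere] nonneg_sphere_nonempty by blast
  then have "maximizer \<in> nonneg_sphere \<and> (\<forall>y\<in>nonneg_sphere. lagrangian y \<le> lagrangian maximizer)"
    unfolding maximizer_def by (rule someI_ex)
  then show "maximizer \<in> nonneg_sphere" "y \<in> nonneg_sphere \<Longrightarrow> lagrangian y \<le> max_lagrangian"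
    by (auto simp: max_lagrangian_def)
qed

lemma maximizer_nonneg: "i < n \<Longrightarrow> 0 \<le> maximizer i"
  using maximizer_in_nonneg_sphere by (simp add: nonneg_sphere_def)

lemma lagrangian_nonneg: "\<forall>i<n. 0 \<le> x i \<Longrightarrow> 0 \<le> lagrangian x"
  unfolding lagrangian_def using edge_subset by (intro sum_nonneg prod_nonneg) blast

lemma max_lagrangian_nonneg: "0 \<le> max_lagrangian"
  unfolding max_lagrangian_def using maximizer_nonneg by (intro lagrangian_nonneg) auto

lemma lagrangian_le_power_sum:
  assumes x: "\<forall>i<n. 0 \<le> x i" shows "lagrangian x \<le> max_lagrangian * power_sum x"
proof (cases "power_sum x = 0")
  case True
  then have "\<forall>i\<in>{..<n}. x i ^ m = 0"
    using x unfolding power_sum_def by (subst sum_nonneg_eq_0_iff[symmetric]) auto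
  then have "(\<Prod>j\<in>e. x j) = 0" if "e \<in> E" for e
    using edge_nonempty[OF that] edge_subset[OF that] finite_edge[OF that] by (auto simp: prod_zero_iff)
  then show ?thesis using True by (simp add: lagrangian_def)
next
  case False
  have "0 \<le> power_sum x" unfolding power_sum_def using x by (auto intro!: sum_nonneg)
  then have pos: "0 < power_sum x" using False by simp
  define t where "t = root m (power_sum x)"
  have t: "0 < t" "t ^ m = power_sum x" using pos m_ge_2 by (simp_all add: t_def real_root_pow_pos)
  define y where "y i = (if i < n then x i / t else 0)" for i
  have "power_sum y = power_sum x / t ^ m" unfolding power_sum_def y_def
    by (simp add: power_divide sum_divide_distrib)
  then have "y \<in> nonneg_sphere" using x t pos by (auto simp: nonneg_sphere_def y_def)
  then have le: "lagrangian y \<le> max_lagrangian" by (rule lagrangian_le_max)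
  have "(\<Prod>j\<in>e. y j) = (\<Prod>j\<in>e. x j) / t ^ m" if e: "e \<in> E" for e
  proof -
    have "(\<Prod>j\<in>e. y j) = (\<Prod>j\<in>e. x j / t)" using edge_subset[OF e] by (intro prod.cong) (auto simp: y_def)
    then show ?thesis using card_edge[OF e] by (simp add: prod_dividef)
  qed
  then have "lagrangian y = lagrangian x / t ^ m" by (simp add: lagrangian_def sum_divide_distrib)
  then show ?thesis using le t pos by (simp add: divide_le_eq mult.commute)
qed

lemma lagrangian_edge_increase:
  assumes xz: "\<forall>i<n. 0 \<le> x i \<and> x i \<le> z i" and e: "e \<in> E"
  shows "lagrangian x - (\<Prod>j\<in>e. x j) + (\<Prod>j\<in>e. z j) \<le> lagrangian z"
proof -
  have "(\<Sum>e'\<in>E-{e}. \<Prod>j\<in>e'. x j) \<le> (\<Sum>e'\<in>E-{e}. \<Prod>j\<in>e'. z j)"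
    using xz edge_subset by (intro sum_mono prod_mono) blast
  then show ?thesis unfolding lagrangian_def
    using sum.remove[OF finite_edges e, of "prod x"] sum.remove[OF finite_edges e, of "prod z"] by simp
qed

lemma edge_with_zero_and_positive:
  assumes "j < n" "maximizer j = 0"
  obtains e a b where "e \<in> E" "a \<in> e" "b \<in> e" "maximizer a = 0" "0 < maximizer b"
proof -
  have "\<exists>e\<in>E. \<exists>a\<in>e. \<exists>b\<in>e. maximizer a = 0 \<and> 0 < maximizer b"
  proof (rule ccontr)
    assume H: "\<not> ?thesis"
    have "maximizer i = 0" if "i < n" for i
    proof (rule connected_induct[where Q = "\<lambda>u. maximizer u = 0", OF _ assms(2,1) that])
      fix e u v assume "e \<in> E" "u \<in> e" "v \<in> e" "maximizer u = 0"
      moreover have "0 \<le> maximizer v" using maximizer_nonneg edge_subset \<open>e \<in> E\<close> \<open>v \<in> e\<close> by blast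
      ultimately show "maximizer v = 0" using H by force
    qed
    then have "power_sum maximizer = 0" unfolding power_sum_def using m_ge_2 by simp
    then show False using maximizer_in_nonneg_sphere by (simp add: nonneg_sphere_def)
  qed
  then show ?thesis using that by blast
qed

lemma power_sum_raise:
  fixes t :: real
  assumes "Z \<subseteq> {..<n}" "\<forall>u\<in>Z. x u = 0"
  shows "power_sum (\<lambda>u. x u + (if u \<in> Z then t else 0)) = power_sum x + card Z * t ^ m"
proof -
  have "power_sum (\<lambda>u. x u + (if u \<in> Z then t else 0)) = (\<Sum>u<n. x u ^ m + (if u \<in> Z then t ^ m else 0))"
    unfolding power_sum_def by (rule sum.cong) (use assms m_ge_2 in auto)
  also have "\<dots> = power_sum x + card Z * t ^ m"
    by (simp add: power_sum_def sum.distrib sum.inter_restrict[symmetric] Int_absorb1[OF assms(1)])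
  finally show ?thesis .
qed

text \<open>If a maximizer vanished somewhere, raising its zero entries on a mixed edge by \<open>t\<close>
  would gain order \<open>t ^ k\<close> in the Lagrangian at a cost of order \<open>t ^ m\<close> in the norm, \<open>k < m\<close>.\<close>
lemma maximizer_pos: assumes i: "i < n" shows "0 < maximizer i"
proof (rule ccontr)
  assume "\<not> 0 < maximizer i"
  then have "maximizer i = 0" using maximizer_nonneg[OF i] by simp
  then obtain e a b where e: "e \<in> E" "a \<in> e" "b \<in> e" "maximizer a = 0" "0 < maximizer b"
    using edge_with_zero_and_positive i by blast
  define Z where "Z = {u\<in>e. maximizer u = 0}"
  define k where "k = card Z"
  define c where "c = (\<Prod>u\<in>e-Z. maximizer u)"
  have "Z \<subseteq> e" "finite Z" using finite_edge[OF e(1)] by (auto simp: Z_def)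
  have "b \<notin> Z" using e by (simp add: Z_def)
  then have "Z \<subset> e" using \<open>Z \<subseteq> e\<close> e(3) by blast
  then have "k < m" unfolding k_def using card_edge[OF e(1)] finite_edge[OF e(1)] psubset_card_mono by metis
  have "0 < c" unfolding c_def
    using maximizer_nonneg edge_subset[OF e(1)] by (intro prod_pos) (force simp: Z_def)
  then obtain t where t: "0 < t" "max_lagrangian * k * t ^ m < t ^ k * c"
    using exists_power_gap[OF \<open>0 < c\<close> _ \<open>k < m\<close>, of "max_lagrangian * k"] max_lagrangian_nonneg
    by auto
  define z where "z = (\<lambda>u. maximizer u + (if u \<in> Z then t else 0))"
  have "(\<Prod>j\<in>e. z j) = (\<Prod>j\<in>Z. z j) * (\<Prod>j\<in>e-Z. z j)"
    using prod.subset_diff[OF \<open>Z \<subseteq> e\<close> finite_edge[OF e(1)]] by (simp add: mult.commute)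
  also have "\<dots> = t ^ k * c" by (simp add: z_def Z_def k_def c_def)
  finally have "(\<Prod>j\<in>e. z j) = t ^ k * c" .
  moreover have "(\<Prod>j\<in>e. maximizer j) = 0" using e finite_edge[OF e(1)] by (auto simp: prod_zero_iff)
  moreover have "\<forall>i<n. 0 \<le> maximizer i \<and> maximizer i \<le> z i"
    using maximizer_nonneg t by (simp add: z_def)
  ultimately have "max_lagrangian + t ^ k * c \<le> lagrangian z"
    using lagrangian_edge_increase[of maximizer z, OF _ e(1)] by (simp add: max_lagrangian_def)
  have "Z \<subseteq> {..<n}" using \<open>Z \<subseteq> e\<close> edge_subset[OF e(1)] by blast
  then have "power_sum z = power_sum maximizer + k * t ^ m"
    unfolding z_def k_def by (rule power_sum_raise) (auto simp: Z_def)
  then have "power_sum z = 1 + k * t ^ m" using maximizer_in_nonneg_sphere by (simp add: nonneg_sphere_def)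
  moreover have "lagrangian z \<le> max_lagrangian * power_sum z"
    using maximizer_nonneg t by (intro lagrangian_le_power_sum) (simp add: z_def)
  ultimately have "t ^ k * c \<le> max_lagrangian * k * t ^ m"
    using \<open>max_lagrangian + t ^ k * c \<le> lagrangian z\<close> by (simp add: algebra_simps)
  then show False using t(2) by simp
qed

lemma lagrangian_update: "lagrangian (x(i := x i + s)) = lagrangian x + s * adj_apply x i"
proof -
  have "(\<Prod>j\<in>e. (x(i := x i + s)) j) = (\<Prod>j\<in>e. x j) + (if i \<in> e then s * (\<Prod>j\<in>e-{i}. x j) else 0)"
    if e: "e \<in> E" for e
  proof (cases "i \<in> e")
    case True
    have "(\<Prod>j\<in>e-{i}. (x(i := x i + s)) j) = (\<Prod>j\<in>e-{i}. x j)" by (rule prod.cong) auto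
    then show ?thesis
      using prod_edge_remove[OF e True, of "x(i := x i + s)"] prod_edge_remove[OF e True, of x] True
      by (simp add: distrib_right)
  qed (auto intro: prod.cong)
  then have "lagrangian (x(i := x i + s)) =
      lagrangian x + (\<Sum>e\<in>E. if i \<in> e then s * (\<Prod>j\<in>e-{i}. x j) else 0)"
    by (simp add: lagrangian_def sum.distrib)
  also have "(\<Sum>e\<in>E. if i \<in> e then s * (\<Prod>j\<in>e-{i}. x j) else 0) = s * adj_apply x i"
    unfolding adj_apply_def
    by (simp add: sum.inter_filter[OF finite_edges, symmetric] sum_distrib_left if_distrib cong: if_cong)
  finally show ?thesis .
qed

lemma power_sum_update:
  assumes "i < n" shows "power_sum (x(i := v)) = power_sum x - x i ^ m + v ^ m"
  using sum.remove[of "{..<n}" i "\<lambda>j. (x(i := v)) j ^ m"] sum.remove[of "{..<n}" i "\<lambda>j. x j ^ m"] assms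
  by (simp add: power_sum_def)

text \<open>The Lagrange multiplier rule: along each coordinate, \<open>lagrangian - max_lagrangian * power_sum\<close>
  has a local maximum at the (interior) maximizer.\<close>
lemma maximizer_eigen:
  assumes i: "i < n"
  shows "adj_apply maximizer i = m * max_lagrangian * maximizer i ^ (m - 1)"
proof -
  define a where "a = adj_apply maximizer i"
  define b where "b = maximizer i"
  have "0 < b" using maximizer_pos[OF i] by (simp add: b_def)
  define h where "h s = s * a - max_lagrangian * ((b + s) ^ m - b ^ m)" for s
  have "(h has_real_derivative (a - max_lagrangian * (of_nat m * (b + 0) ^ (m - 1) * 1 - 0))) (at 0)"
    unfolding h_def by (auto intro!: derivative_eq_intros)
  then have D: "(h has_real_derivative (a - max_lagrangian * m * b ^ (m - 1))) (at 0)"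
    by (simp add: algebra_simps)
  have "h s \<le> h 0" if "\<bar>0 - s\<bar> < b" for s
  proof -
    define y where "y = maximizer(i := maximizer i + s)"
    have "\<forall>j<n. 0 \<le> y j" using maximizer_nonneg that by (auto simp: y_def b_def abs_less_iff)
    moreover have "lagrangian y = max_lagrangian + s * a"
      unfolding y_def lagrangian_update max_lagrangian_def a_def ..
    moreover have "power_sum y = 1 - b ^ m + (b + s) ^ m"
      unfolding y_def power_sum_update[OF i] using maximizer_in_nonneg_sphere by (simp add: nonneg_sphere_def b_def)
    ultimately have "max_lagrangian + s * a \<le> max_lagrangian * (1 - b ^ m + (b + s) ^ m)"
      using lagrangian_le_power_sum[of y] by simp
    then show ?thesis unfolding h_def by (simp add: algebra_simps)
  qed
  then have "a - max_lagrangian * m * b ^ (m - 1) = 0" using DERIV_local_max[OF D \<open>0 < b\<close>] by blast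
  then show ?thesis by (simp add: a_def b_def)
qed

definition perron_vec :: "nat \<Rightarrow> real" where
  "perron_vec i = (if i < n then maximizer i / maximizer 0 else 0)"

definition perron_root :: real where
  "perron_root = m * max_lagrangian"

lemma perron_vec_pos: "i < n \<Longrightarrow> 0 < perron_vec i"
  using maximizer_pos n_pos by (simp add: perron_vec_def)

lemma perron_vec_0: "perron_vec 0 = 1"
  using maximizer_pos[of 0] n_pos by (simp add: perron_vec_def)

lemma perron_root_nonneg: "0 \<le> perron_root"
  using max_lagrangian_nonneg by (simp add: perron_root_def)

lemma adj_apply_scale: "adj_apply (\<lambda>j. t * x j) i = t ^ (m - 1) * adj_apply x i"
  unfolding adj_apply_def sum_distrib_left
  by (intro sum.cong refl) (auto simp: prod.distrib card_edge)

lemma adj_apply_cong: "(\<And>j. j < n \<Longrightarrow> x j = y j) \<Longrightarrow> adj_apply x i = adj_apply y i"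
  unfolding adj_apply_def using edge_subset by (intro sum.cong prod.cong refl) blast+

lemma perron_vec_eigen:
  assumes i: "i < n" shows "adj_apply perron_vec i = perron_root * perron_vec i ^ (m - 1)"
proof -
  have "adj_apply perron_vec i = adj_apply (\<lambda>j. inverse (maximizer 0) * maximizer j) i"
    by (rule adj_apply_cong) (simp add: perron_vec_def field_simps)
  also have "\<dots> = inverse (maximizer 0) ^ (m - 1) * adj_apply maximizer i" by (rule adj_apply_scale)
  also have "\<dots> = perron_root * perron_vec i ^ (m - 1)"
    using maximizer_eigen[OF i] i by (simp add: perron_root_def perron_vec_def power_divide field_simps)
  finally show ?thesis .
qed

lemma sum_mult_adj_apply: "(\<Sum>i<n. x i * adj_apply x i) = m * lagrangian x"
proof -
  have "(\<Sum>i<n. x i * adj_apply x i) = (\<Sum>i<n. \<Sum>e\<in>{e\<in>E. i \<in> e}. \<Prod>j\<in>e. x j)"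
    unfolding adj_apply_def sum_distrib_left
  proof (intro sum.cong refl)
    fix i e assume "e \<in> {e \<in> E. i \<in> e}"
    then show "x i * (\<Prod>j\<in>e-{i}. x j) = (\<Prod>j\<in>e. x j)" using prod_edge_remove[of e i x] by simp
  qed
  also have "\<dots> = (\<Sum>e\<in>E. \<Sum>i\<in>{i\<in>{..<n}. i \<in> e}. \<Prod>j\<in>e. x j)"
    by (rule sum.swap_restrict) (simp_all add: finite_edges)
  also have "\<dots> = (\<Sum>e\<in>E. of_nat m * (\<Prod>j\<in>e. x j))"
  proof (rule sum.cong[OF refl])
    fix e assume e: "e \<in> E"
    then have "{i\<in>{..<n}. i \<in> e} = e" using edge_subset by auto
    then show "(\<Sum>i\<in>{i\<in>{..<n}. i \<in> e}. \<Prod>j\<in>e. x j) = of_nat m * (\<Prod>j\<in>e. x j)"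
      using card_edge[OF e] by simp
  qed
  finally show ?thesis by (simp add: lagrangian_def sum_distrib_left)
qed

definition perron_cvec :: "nat \<Rightarrow> complex" where
  "perron_cvec i = complex_of_real (perron_vec i)"

lemma perron_cvec_eigenpair: "tensor_eigenpair n m (adj_tensor m E) (of_real perron_root) perron_cvec"
proof -
  have "adj_apply perron_cvec i = of_real (adj_apply perron_vec i)" for i
    by (simp add: adj_apply_def perron_cvec_def)
  then show ?thesis unfolding tensor_eigenpair_def
  proof (intro conjI allI impI)
    show "is_vec n perron_cvec" by (simp add: is_vec_def perron_cvec_def perron_vec_def)
    show "\<exists>i<n. perron_cvec i \<noteq> 0"
      using n_pos perron_vec_0 by (auto simp: perron_cvec_def intro!: exI[of _ 0])
  qed (simp add: tensor_apply_adj_tensor perron_vec_eigen perron_cvec_def)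
qed

lemma eigenpair_norm_le:
  assumes "tensor_eigenpair n m (adj_tensor m E) l y" "i < n"
  shows "cmod l * cmod (y i) ^ (m - 1) \<le> adj_apply (\<lambda>j. cmod (y j)) i"
proof -
  have "cmod l * cmod (y i) ^ (m - 1) = cmod (adj_apply y i)"
    using assms by (simp add: tensor_eigenpair_def tensor_apply_adj_tensor norm_mult norm_power)
  also have "\<dots> \<le> adj_apply (\<lambda>j. cmod (y j)) i"
    unfolding adj_apply_def by (rule order.trans[OF norm_sum]) (simp add: prod_norm)
  finally show ?thesis .
qed

lemma eigenvalue_norm_le:
  assumes ep: "tensor_eigenpair n m (adj_tensor m E) l y"
  shows "cmod l \<le> perron_root"
proof -
  define a where "a = (\<lambda>j. cmod (y j))"
  have each: "cmod l * a i ^ m \<le> a i * adj_apply a i" if "i < n" for i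
  proof -
    have "a i * (cmod l * a i ^ (m - 1)) \<le> a i * adj_apply a i"
      using eigenpair_norm_le[OF ep that] by (intro mult_left_mono) (simp_all add: a_def)
    moreover have "a i * a i ^ (m - 1) = a i ^ m" using m_ge_2 by (cases m) simp_all
    ultimately show ?thesis by (simp add: algebra_simps)
  qed
  have "cmod l * power_sum a \<le> (\<Sum>i<n. a i * adj_apply a i)"
    unfolding power_sum_def sum_distrib_left by (rule sum_mono) (simp add: each)
  also have "\<dots> = m * lagrangian a" by (rule sum_mult_adj_apply)
  also have "\<dots> \<le> perron_root * power_sum a"
    using mult_left_mono[OF lagrangian_le_power_sum[of a], of "real m"]
    by (simp add: a_def perron_root_def mult.assoc)
  finally have le: "cmod l * power_sum a \<le> perron_root * power_sum a" .
  obtain i where "i < n" "y i \<noteq> 0" using ep by (auto simp: tensor_eigenpair_def)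
  then have "0 < power_sum a" unfolding power_sum_def by (intro sum_pos2[of _ i]) (auto simp: a_def)
  then show ?thesis using le by simp
qed

lemma spectral_radius_eq: "tensor_spectral_radius n m (adj_tensor m E) = perron_root"
  unfolding tensor_spectral_radius_def
proof (rule cSup_eq_maximum)
  show "perron_root \<in> {cmod l |l. \<exists>x. tensor_eigenpair n m (adj_tensor m E) l x}"
    using perron_cvec_eigenpair perron_root_nonneg by force
next
  fix x assume "x \<in> {cmod l |l. \<exists>x. tensor_eigenpair n m (adj_tensor m E) l x}"
  then show "x \<le> perron_root" using eigenvalue_norm_le by auto
qed

lemma perron_cvec_in_rho_vecs: "perron_cvec \<in> rho_vecs n m (adj_tensor m E)"
  using perron_cvec_eigenpair perron_vec_0 by (simp add: rho_vecs_def spectral_radius_eq perron_cvec_def)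

text \<open>Equality at one vertex of an edge forces equality at all its vertices, since every
  product in the sum \<open>adj_apply a u\<close> is bounded by the corresponding one for the Perron vector.\<close>
lemma dominated_eq_propagates:
  assumes a: "\<forall>j<n. 0 \<le> a j \<and> a j \<le> t * perron_vec j" and "0 < t"
    and sub: "perron_root * a u ^ (m - 1) \<le> adj_apply a u" and eq: "a u = t * perron_vec u"
    and e: "e \<in> E" "u \<in> e" "w \<in> e"
  shows "a w = t * perron_vec w"
proof (rule ccontr)
  assume ne: "a w \<noteq> t * perron_vec w"
  then have "w \<noteq> u" using eq by auto
  define b where "b = (\<lambda>j. t * perron_vec j)"
  have "u < n" using e edge_subset by blast
  have le: "\<forall>j\<in>e'-{u}. 0 \<le> a j \<and> a j \<le> b j" if "e' \<in> E" for e'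
    using a edge_subset[OF that] by (auto simp: b_def)
  have "(\<Prod>j\<in>e-{u}. a j) < (\<Prod>j\<in>e-{u}. b j)"
  proof (rule prod_mono_strict)
    show "w \<in> e - {u}" using e \<open>w \<noteq> u\<close> by simp
    then have "a w \<le> b w" using le[OF e(1)] by blast
    then show "a w < b w" using ne by (simp add: b_def)
    show "0 < b j" if "j \<in> e - {u}" for j
      using that edge_subset[OF e(1)] perron_vec_pos \<open>0 < t\<close> by (auto simp: b_def)
  qed (use le[OF e(1)] finite_edge[OF e(1)] in auto)
  then have "adj_apply a u < adj_apply b u"
    unfolding adj_apply_def using finite_edges e le
    by (intro sum_strict_mono_ex1) (auto intro!: prod_mono)
  also have "adj_apply b u = perron_root * a u ^ (m - 1)"
    using adj_apply_scale[of t perron_vec] perron_vec_eigen[OF \<open>u < n\<close>] eq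
    by (simp add: b_def power_mult_distrib)
  finally show False using sub by simp
qed

lemma rho_vecs_norm:
  assumes y: "y \<in> rho_vecs n m (adj_tensor m E)" and i: "i < n"
  shows "cmod (y i) = perron_vec i"
proof -
  have ep: "tensor_eigenpair n m (adj_tensor m E) (of_real perron_root) y" and "y 0 = 1"
    using y by (auto simp: rho_vecs_def spectral_radius_eq)
  define a where "a = (\<lambda>j. cmod (y j))"
  define R where "R = (\<lambda>j. a j / perron_vec j) ` {..<n}"
  define t where "t = Max R"
  have "finite R" "R \<noteq> {}" using n_pos by (auto simp: R_def lessThan_empty_iff)
  have le: "a j \<le> t * perron_vec j" if "j < n" for j
  proof -
    have "a j / perron_vec j \<le> t" unfolding t_def using \<open>finite R\<close> that by (intro Max_ge) (auto simp: R_def)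
    then show ?thesis using perron_vec_pos[OF that] by (simp add: divide_le_eq)
  qed
  have "t \<in> R" unfolding t_def using \<open>finite R\<close> \<open>R \<noteq> {}\<close> by (rule Max_in)
  then obtain p where "p < n" "t = a p / perron_vec p" by (auto simp: R_def)
  then have "a p = t * perron_vec p" using perron_vec_pos[of p] by simp
  have "a 0 = 1" using \<open>y 0 = 1\<close> by (simp add: a_def)
  then have "1 \<le> t" using le[of 0] n_pos perron_vec_0 by simp
  have nonneg: "\<forall>j<n. 0 \<le> a j \<and> a j \<le> t * perron_vec j" using le by (simp add: a_def)
  have all: "a j = t * perron_vec j" if "j < n" for j
  proof (rule connected_induct[where Q = "\<lambda>u. a u = t * perron_vec u", OF _ \<open>a p = _\<close> \<open>p < n\<close> that])
    fix e u w assume e: "e \<in> E" "u \<in> e" "w \<in> e" and "a u = t * perron_vec u"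
    moreover have "u < n" using edge_subset e by blast
    then have "perron_root * a u ^ (m - 1) \<le> adj_apply a u"
      using eigenpair_norm_le[OF ep] perron_root_nonneg unfolding a_def by simp
    ultimately show "a w = t * perron_vec w"
      using dominated_eq_propagates[OF nonneg _ _ _ e] \<open>1 \<le> t\<close> by simp
  qed
  then have "t = 1" using all[of 0] n_pos perron_vec_0 \<open>a 0 = 1\<close> by simp
  then show ?thesis using all[OF i] by (simp add: a_def)
qed

definition phase :: "(nat \<Rightarrow> complex) \<Rightarrow> nat \<Rightarrow> complex" where
  "phase y = (\<lambda>i. if i < n then sgn (y i) else 1)"

lemma rho_vecs_outside: "y \<in> rho_vecs n m (adj_tensor m E) \<Longrightarrow> i \<ge> n \<Longrightarrow> y i = 0"
  by (simp add: rho_vecs_def tensor_eigenpair_def is_vec_def)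

lemma rho_vecs_phase:
  assumes y: "y \<in> rho_vecs n m (adj_tensor m E)" and i: "i < n"
  shows "y i = phase y i * perron_cvec i" "cmod (phase y i) = 1"
proof -
  have "cmod (y i) = perron_vec i" by (rule rho_vecs_norm[OF y i])
  moreover have "y i = sgn (y i) * complex_of_real (cmod (y i))"
    by (cases "y i = 0") (simp_all add: sgn_div_norm scaleR_conv_of_real)
  ultimately show "y i = phase y i * perron_cvec i" using i by (simp add: phase_def perron_cvec_def)
  have "y i \<noteq> 0" using \<open>cmod (y i) = perron_vec i\<close> perron_vec_pos[OF i] by auto
  then show "cmod (phase y i) = 1" using i by (simp add: phase_def norm_sgn)
qed

lemma pos_vec_eq: "pos_vec n m (adj_tensor m E) = perron_cvec"
  unfolding pos_vec_def
proof (rule the_equality)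
  show "perron_cvec \<in> rho_vecs n m (adj_tensor m E) \<and> (\<forall>i<n. perron_cvec i \<in> \<real> \<and> 0 < Re (perron_cvec i))"
    using perron_cvec_in_rho_vecs perron_vec_pos by (simp add: perron_cvec_def)
next
  fix y assume y: "y \<in> rho_vecs n m (adj_tensor m E) \<and> (\<forall>i<n. y i \<in> \<real> \<and> 0 < Re (y i))"
  show "y = perron_cvec"
  proof
    fix j show "y j = perron_cvec j"
    proof (cases "j < n")
      case True
      then obtain r where "y j = of_real r" using y Reals_cases by blast
      moreover have "0 < Re (y j)" using y True by blast
      ultimately have "cmod (y j) = r" "y j = of_real r" by simp_all
      then show ?thesis using rho_vecs_norm[OF conjunct1[OF y] True] by (simp add: perron_cvec_def)
    qed (use y rho_vecs_outside in \<open>simp add: perron_cvec_def perron_vec_def\<close>)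
  qed
qed

text \<open>Comparing both sides of the eigenvalue equation at \<open>i\<close>: the left side is a positive
  combination of the unit numbers \<open>\<Prod>j\<in>e-{i}. phase y j\<close>, the right side is their total weight
  times the unit number \<open>phase y i ^ (m - 1)\<close>.\<close>
lemma phase_edge_balanced:
  assumes y: "y \<in> rho_vecs n m (adj_tensor m E)"
  shows "edge_balanced (phase y)"
  unfolding edge_balanced_def
proof (intro ballI)
  fix e i assume e: "e \<in> E" and "i \<in> e"
  then have "i < n" using edge_subset by blast
  define d where "d = phase y"
  define Ei where "Ei = {e\<in>E. i \<in> e}"
  define w where "w e' = (\<Prod>j\<in>e'-{i}. perron_vec j)" for e'
  have yd: "y j = d j * perron_cvec j" and nd: "cmod (d j) = 1" if "j < n" for j
    using rho_vecs_phase[OF y that] by (simp_all add: d_def)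
  have sub: "j < n" if "e' \<in> Ei" "j \<in> e' - {i}" for e' j using that edge_subset by (auto simp: Ei_def)
  have "adj_apply y i = (\<Sum>e'\<in>Ei. of_real (w e') * (\<Prod>j\<in>e'-{i}. d j))"
    unfolding adj_apply_def Ei_def[symmetric]
  proof (rule sum.cong[OF refl])
    fix e' assume "e' \<in> Ei"
    then have "(\<Prod>j\<in>e'-{i}. y j) = (\<Prod>j\<in>e'-{i}. d j * perron_cvec j)"
      using sub yd by (intro prod.cong) auto
    then show "(\<Prod>j\<in>e'-{i}. y j) = of_real (w e') * (\<Prod>j\<in>e'-{i}. d j)"
      by (simp add: prod.distrib w_def perron_cvec_def mult.commute)
  qed
  moreover have "adj_apply y i = of_real perron_root * y i ^ (m - 1)"
    using y \<open>i < n\<close> by (simp add: rho_vecs_def tensor_eigenpair_def spectral_radius_eq tensor_apply_adj_tensor)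
  moreover have "of_real perron_root * y i ^ (m - 1) = of_real (\<Sum>e'\<in>Ei. w e') * d i ^ (m - 1)"
    using yd[OF \<open>i < n\<close>] perron_vec_eigen[OF \<open>i < n\<close>]
    by (simp add: perron_cvec_def power_mult_distrib adj_apply_def Ei_def w_def)
  ultimately have eq: "(\<Sum>e'\<in>Ei. of_real (w e') * (\<Prod>j\<in>e'-{i}. d j)) = of_real (\<Sum>e'\<in>Ei. w e') * d i ^ (m - 1)"
    by simp
  show "(\<Prod>j\<in>e-{i}. phase y j) = phase y i ^ (m - 1)"
    unfolding d_def[symmetric]
  proof (rule units_eq_of_weighted_sum_eq[OF _ _ _ _ eq])
    show "finite Ei" using finite_edges by (simp add: Ei_def)
    show "e \<in> Ei" using e \<open>i \<in> e\<close> by (simp add: Ei_def)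
    show "cmod (d i ^ (m - 1)) = 1" using nd[OF \<open>i < n\<close>] by (simp add: norm_power)
    show "0 < w e'" if "e' \<in> Ei" for e' using sub[OF that] perron_vec_pos by (auto simp: w_def intro!: prod_pos)
    show "cmod (\<Prod>j\<in>e'-{i}. d j) = 1" if "e' \<in> Ei" for e'
      unfolding prod_norm[symmetric] using sub[OF that] nd by (intro prod.neutral) auto
  qed
qed

lemma phase_in_stabilizers:
  assumes y: "y \<in> rho_vecs n m (adj_tensor m E)" shows "phase y \<in> stabilizers"
proof -
  have "phase y 0 = 1"
    using rho_vecs_phase(1)[OF y, of 0] n_pos perron_vec_0 y by (simp add: rho_vecs_def perron_cvec_def)
  moreover have "phase y i \<noteq> 0" if "i < n" for i using rho_vecs_phase(2)[OF y that] by auto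
  ultimately show ?thesis using phase_edge_balanced[OF y] by (simp add: stabilizers_def phase_def)
qed

lemma inj_on_phase: "inj_on phase (rho_vecs n m (adj_tensor m E))"
proof (rule inj_onI)
  fix a b assume a: "a \<in> rho_vecs n m (adj_tensor m E)" and b: "b \<in> rho_vecs n m (adj_tensor m E)"
    and "phase a = phase b"
  show "a = b"
  proof
    fix j show "a j = b j"
      using rho_vecs_phase(1)[OF a, of j] rho_vecs_phase(1)[OF b, of j] \<open>phase a = phase b\<close>
        rho_vecs_outside[OF a, of j] rho_vecs_outside[OF b, of j]
      by (cases "j < n") auto
  qed
qed

lemma phase_perron_cvec: "phase perron_cvec = (\<lambda>i. 1)"
  using perron_vec_pos by (auto simp: phase_def perron_cvec_def sgn_of_real)

lemma phase_stab_op: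
  assumes a: "a \<in> rho_vecs n m (adj_tensor m E)" and b: "b \<in> rho_vecs n m (adj_tensor m E)"
  shows "phase (stab_op n m (adj_tensor m E) a b) = (\<lambda>i. phase a i * phase b i)"
proof
  fix i show "phase (stab_op n m (adj_tensor m E) a b) i = phase a i * phase b i"
  proof (cases "i < n")
    case True
    have "sgn (phase a i) = phase a i" "sgn (phase b i) = phase b i"
      using rho_vecs_phase(2)[OF a True] rho_vecs_phase(2)[OF b True] by (simp_all add: sgn_div_norm)
    then show ?thesis
      using True perron_vec_pos[OF True]
      by (simp add: phase_def stab_op_def pos_vec_eq sgn_mult perron_cvec_def sgn_of_real)
  qed (simp add: phase_def stab_op_def)
qed

lemma phase_image_submodule:
  assumes N: "stab_submodule n m (adj_tensor m E) N"
  shows "root_group m (phase ` N)" "phase ` N \<subseteq> stabilizers"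
proof -
  have sub: "N \<subseteq> rho_vecs n m (adj_tensor m E)" and "perron_cvec \<in> N"
    and closed: "\<forall>a\<in>N. \<forall>b\<in>N. stab_op n m (adj_tensor m E) a b \<in> N"
    using N by (auto simp: stab_submodule_def pos_vec_eq)
  show stab: "phase ` N \<subseteq> stabilizers" using sub phase_in_stabilizers by blast
  show "root_group m (phase ` N)" unfolding root_group_def
  proof (intro conjI ballI allI)
    show "(\<lambda>i. 1) \<in> phase ` N" using \<open>perron_cvec \<in> N\<close> phase_perron_cvec by force
  next
    fix x y assume "x \<in> phase ` N" "y \<in> phase ` N"
    then obtain a b where "a \<in> N" "b \<in> N" "x = phase a" "y = phase b" by auto
    moreover have "a \<in> rho_vecs n m (adj_tensor m E)" "b \<in> rho_vecs n m (adj_tensor m E)"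
      using sub \<open>a \<in> N\<close> \<open>b \<in> N\<close> by auto
    ultimately have "(\<lambda>i. x i * y i) = phase (stab_op n m (adj_tensor m E) a b)"
      using phase_stab_op by simp
    moreover have "stab_op n m (adj_tensor m E) a b \<in> N" using closed \<open>a \<in> N\<close> \<open>b \<in> N\<close> by blast
    ultimately show "(\<lambda>i. x i * y i) \<in> phase ` N" by (rule image_eqI)
  next
    fix x i assume "x \<in> phase ` N" then show "x i ^ m = 1" using stab stabilizer_power by blast
  qed
qed

lemma stab_submodule_perron: "stab_submodule n m (adj_tensor m E) {perron_cvec}"
proof -
  have op: "stab_op n m (adj_tensor m E) perron_cvec perron_cvec = perron_cvec"
  proof
    fix i show "stab_op n m (adj_tensor m E) perron_cvec perron_cvec i = perron_cvec i"
    proof (cases "i < n")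
      case True
      then show ?thesis using perron_vec_pos[OF True] by (simp add: stab_op_def pos_vec_eq perron_cvec_def sgn_of_real)
    qed (simp add: stab_op_def perron_cvec_def perron_vec_def)
  qed
  have "stab_smult n m (adj_tensor m E) k perron_cvec = perron_cvec" for k
    by (induction k) (simp_all add: stab_smult_def pos_vec_eq op)
  then show ?thesis using op perron_cvec_in_rho_vecs by (simp add: stab_submodule_def pos_vec_eq)
qed

lemma finite_stabilizers: "finite stabilizers" "card stabilizers \<noteq> 0"
proof -
  have "is_path n E [0] []" using n_pos by (simp add: is_path_def)
  then have "card stabilizers dvd m ^ (n - 1)" using card_stabilizers_dvd by fastforce
  then show "card stabilizers \<noteq> 0" using m_ge_2 by (cases "card stabilizers = 0") auto
  then show "finite stabilizers" using card_ge_0_finite by blast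
qed

lemma submodule_chain_length_le:
  assumes N: "\<And>i. i \<le> k \<Longrightarrow> stab_submodule n m (adj_tensor m E) (N i)"
    and chain: "\<And>i. i < k \<Longrightarrow> N i \<subset> N (Suc i)"
  shows "k \<le> cl (card stabilizers)"
proof -
  define T where "T i = phase ` N i" for i
  have T: "root_group m (T i)" "T i \<subseteq> stabilizers" if "i \<le> k" for i
    using phase_image_submodule[OF N[OF that]] by (simp_all add: T_def)
  have fin: "finite (T i)" if "i \<le> k" for i using T(2)[OF that] finite_stabilizers(1) finite_subset by blast
  have strict: "T i \<subset> T (Suc i)" if "i < k" for i
  proof -
    have "N (Suc i) \<subseteq> rho_vecs n m (adj_tensor m E)" using N[of "Suc i"] that by (simp add: stab_submodule_def)
    then have "inj_on phase (N (Suc i))" using inj_on_phase inj_on_subset by blast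
    then show ?thesis unfolding T_def using chain[OF that] by (rule image_strict_mono)
  qed
  have "card (T i) dvd card (T (Suc i)) \<and> card (T i) \<noteq> card (T (Suc i))" if "i < k" for i
  proof -
    have "i \<le> k" "Suc i \<le> k" using that by simp_all
    then have "card (T i) dvd card (T (Suc i))"
      using root_group_card_dvd[OF T(1) T(1)] strict[OF that] m_ge_2 by auto
    moreover have "card (T i) < card (T (Suc i))"
      using psubset_card_mono fin[OF \<open>Suc i \<le> k\<close>] strict[OF that] by blast
    ultimately show ?thesis by simp
  qed
  moreover have "card (T k) \<noteq> 0" using T(1)[of k] fin[of k] by (auto simp: root_group_def)
  ultimately have "k \<le> cl (card (T k))" by (rule dvd_chain_length_le_cl)
  also have "\<dots> \<le> cl (card stabilizers)"
    using root_group_card_dvd[OF T(1) root_group_stabilizers T(2)] m_ge_2 finite_stabilizers(2)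
    by (intro cl_le_of_dvd) simp_all
  finally show ?thesis .
qed

lemma stabilizing_dimension_le: "stabilizing_dimension n m (adj_tensor m E) \<le> cl (card stabilizers)"
proof -
  define K where "K = {k. \<exists>N :: nat \<Rightarrow> (nat \<Rightarrow> complex) set.
      (\<forall>i\<le>k. stab_submodule n m (adj_tensor m E) (N i)) \<and> (\<forall>i<k. N i \<subset> N (Suc i))}"
  have bound: "k \<le> cl (card stabilizers)" if "k \<in> K" for k
    using that submodule_chain_length_le by (auto simp: K_def)
  have "0 \<in> K" unfolding K_def using stab_submodule_perron by (auto intro!: exI[of _ "\<lambda>_. {perron_cvec}"])
  moreover have "finite K" using bound by (meson finite_atMost finite_subset atMost_iff subsetI)
  ultimately have "Max K \<in> K" by (intro Max_in) auto
  then show ?thesis unfolding stabilizing_dimension_def K_def[symmetric] by (rule bound)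
qed

end

theorem corollary4p15:
  fixes n m :: nat and E :: "nat set set"
  assumes "m \<ge> 2" and "n \<ge> 1"
    and "uniform_hypergraph n m E" and "hg_connected n E"
  shows "stabilizing_index n m (adj_tensor m E) \<le> m ^ (n - max_path_length n E - 1)
       \<and> stabilizing_dimension n m (adj_tensor m E) \<le> (n - max_path_length n E - 1) * cl m"
proof -
  interpret connected_uniform_hypergraph n m E using assms by unfold_locales
  define l where "l = max_path_length n E"
  obtain vs es where "is_path n E vs es" "length es = l" unfolding l_def by (rule longest_path)
  then have dvd: "card stabilizers dvd m ^ (n - l - 1)" using card_stabilizers_dvd by blast
  have "0 < m ^ (n - l - 1)" using assms(1) by simp
  then have "stabilizing_index n m (adj_tensor m E) \<le> m ^ (n - l - 1)"
    using dvd_imp_le[OF dvd] stabilizing_index_eq_card by simp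
  moreover have "cl (card stabilizers) \<le> (n - l - 1) * cl m"
    using cl_le_of_dvd[OF dvd] \<open>0 < m ^ (n - l - 1)\<close> cl_power assms(1) by simp
  then have "stabilizing_dimension n m (adj_tensor m E) \<le> (n - l - 1) * cl m"
    using stabilizing_dimension_le by (rule le_trans[rotated])
  ultimately show ?thesis unfolding l_def by simp
qed

end
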